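(* Let $M\ge1$ and consider a memoryless channel with binary input $\{0,1\}$, output alphabet $\mathcal{Y}=\{-M,\dots,M\}$ and transition probabilities $\varepsilon_{y|x}$ satisfying $\varepsilon_{y|1}=\varepsilon_{-y|0}$ for all $y$. Let $\mathcal{C}\subseteq\{0,1\}^n$ be a binary linear code with minimum distance $d_{\min}$ and weight distribution $S_w$, used with maximum-likelihood decoding. Let $\mathbf{m}=(m_{-M+1},\dots,m_M)\in\mathbb{Z}_+^{2M}$. Then the decoding error probability satisfies $$P_e\le\sum_{\boldsymbol{\ell}\in\tilde{\mathcal{U}}_n(\mathbf{m})}\Big(\prod_{j=-M}^M\varepsilon_{j|0}^{\ell_j}\Big)\min\Bigg\{\sum_{w=d_{\min}}^n S_w\sum_{\substack{\boldsymbol{\mu}\in\mathcal{U}_w(\boldsymbol{\ell})\\ \sum_j\mu_j\mathrm{LLR}_j\le0}}\binom{w}{\mu_{-M},\dots,\mu_M}\binom{n-w}{\ell_{-M}-\mu_{-M},\dots,\ell_M-\mu_M},\ \binom{n}{\ell_{-M},\dots,\ell_M}\Bigg\}+\sum_{\substack{\boldsymbol{\ell}\in\mathbb{Z}_+^{2M+1},\ \sum_j\ell_j=n\\ \boldsymbol{\ell}\notin\tilde{\mathcal{U}}_n(\mathbf{m})}}\Big(\prod_{j=-M}^M\varepsilon_{j|0}^{\ell_j}\Big)\binom{n}{\ell_{-M},\dots,\ell_M}.$$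
   Context: $\mathbb{Z}_+$ denotes the nonnegative integers; $S_w$ is the number of codewords of Hamming weight $w$; $\binom{m}{a_1,\dots,a_k}=m!/(a_1!\cdots a_k!)$. $\tilde{\mathcal{U}}_n(\mathbf{m})=\{\boldsymbol{\ell}=(\ell_{-M},\dots,\ell_M)\in\mathbb{Z}_+^{2M+1}:\ \sum_j\ell_j=n,\ \ell_j\le m_j\ \text{for } j=-M+1,\dots,M\}$ (no constraint on $\ell_{-M}$). For $\boldsymbol{\ell}$ with $\sum_j\ell_j=n$, $\mathcal{U}_w(\boldsymbol{\ell})=\{\boldsymbol{\mu}\in\mathbb{Z}_+^{2M+1}:\ \sum_j\mu_j=w,\ \mu_j\le\ell_j\ \forall j\}$. $\mathrm{LLR}_j=\log(\varepsilon_{j|0}/\varepsilon_{j|1})$, and $\sum_j\mu_j\mathrm{LLR}_j\le0$ means $\prod_j(\varepsilon_{j|0}/\varepsilon_{j|1})^{\mu_j}\le1$. The error probability is the probability that the decoder does not output the transmitted codeword, with likelihood ties counted as errors; by linearity and symmetry it does not depend on the transmitted codeword. *)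

theory Defs
  imports Complex_Main
begin

text \<open>Binary input symbols: False = 0, True = 1. Output alphabet {-M..M} (integers).
  A channel is a function eps :: int => bool => real with eps y x = transition probability.\<close>

definition outputs :: "nat \<Rightarrow> nat \<Rightarrow> int list set" where
  "outputs M n = {ys. length ys = n \<and> set ys \<subseteq> {- int M .. int M}}"

definition lik :: "(int \<Rightarrow> bool \<Rightarrow> real) \<Rightarrow> int list \<Rightarrow> bool list \<Rightarrow> real" where
  "lik eps ys c = (\<Prod>i<length ys. eps (ys ! i) (c ! i))"

text \<open>Error probability of ML decoding when codeword c is transmitted; ties count as errors.\<close>
definition err_prob :: "nat \<Rightarrow> nat \<Rightarrow> (int \<Rightarrow> bool \<Rightarrow> real) \<Rightarrow> bool list set \<Rightarrow> bool list \<Rightarrow> real" where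
  "err_prob M n eps C c =
     (\<Sum>ys\<in>outputs M n.
        if (\<exists>c'\<in>C. c' \<noteq> c \<and> lik eps ys c \<le> lik eps ys c') then lik eps ys c else 0)"

definition hweight :: "bool list \<Rightarrow> nat" where
  "hweight c = length (filter id c)"

definition binary_linear_code :: "nat \<Rightarrow> bool list set \<Rightarrow> bool" where
  "binary_linear_code n C \<longleftrightarrow> C \<subseteq> {c. length c = n} \<and> replicate n False \<in> C \<and>
     (\<forall>a\<in>C. \<forall>b\<in>C. map2 (\<noteq>) a b \<in> C)"

text \<open>Minimum distance = minimum weight of a nonzero codeword (linear code).\<close>
definition dmin :: "bool list set \<Rightarrow> nat" where
  "dmin C = Inf {hweight c | c. c \<in> C \<and> hweight c \<noteq> 0}"

definition wdist :: "bool list set \<Rightarrow> nat \<Rightarrow> nat" where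
  "wdist C w = card {c\<in>C. hweight c = w}"

definition comps :: "nat \<Rightarrow> nat \<Rightarrow> (int \<Rightarrow> nat) set" where
  "comps M n = {l. (\<forall>j. j \<notin> {- int M .. int M} \<longrightarrow> l j = 0) \<and> (\<Sum>j = - int M .. int M. l j) = n}"

definition Ut :: "nat \<Rightarrow> nat \<Rightarrow> (int \<Rightarrow> nat) \<Rightarrow> (int \<Rightarrow> nat) set" where
  "Ut M n m = {l \<in> comps M n. \<forall>j \<in> {- int M + 1 .. int M}. l j \<le> m j}"

definition Uw :: "nat \<Rightarrow> nat \<Rightarrow> (int \<Rightarrow> nat) \<Rightarrow> (int \<Rightarrow> nat) set" where
  "Uw M w l = {mu \<in> comps M w. \<forall>j. mu j \<le> l j}"

definition multinom :: "nat \<Rightarrow> nat \<Rightarrow> (int \<Rightarrow> nat) \<Rightarrow> real" where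
  "multinom M k l = real (fact k) / (\<Prod>j = - int M .. int M. real (fact (l j)))"

end

(*
  By the symmetry eps(y|1) = eps(-y|0), negating the output symbols at the positions where c is 1
  turns likelihoods under a codeword c' into likelihoods under c' + c, and translation by c maps the
  linear code onto itself; so the error probability does not depend on the transmitted codeword and
  we may send the zero word.

  Group the outputs by their type l (the number of occurrences of each symbol): every output of
  type l has likelihood prod_j eps(j|0)^l_j under the zero word, and there are multinomial(n; l)
  of them. An output of type l is decoded wrongly only if some nonzero codeword c' is at least as
  likely. Splitting the output into its part on the support of c' (of type mu, with |mu| = w the
  weight of c') and the rest (of type l - mu), the factor contributed by the rest is the same under
  both codewords, so the comparison becomes prod_j eps(j|0)^mu_j <= prod_j eps(j|1)^mu_j. Counting
  the pairs of words of types mu and l - mu and taking the union bound over the nonzero codewords,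
  grouped by weight, gives the first term of the minimum; the second is the trivial bound.
*)

theory Submission
  imports Defs "HOL-Combinatorics.Multiset_Permutations"
begin

definition words_of_type :: "('a \<Rightarrow> nat) \<Rightarrow> 'a list set" where
  "words_of_type l = {xs. count (mset xs) = l}"

lemma count_Abs_multiset_finite_support:
  assumes "finite S" "\<And>j. j \<notin> S \<Longrightarrow> l j = 0"
  shows "count (Abs_multiset l) = l"
proof (rule count_Abs_multiset)
  have "{x. l x > 0} \<subseteq> S" using assms(2) by (metis (mono_tags) mem_Collect_eq not_less0 subsetI)
  then show "finite {x. l x > 0}" using assms(1) by (rule finite_subset)
qed

lemma words_of_type_eq_permutations_of_multiset:
  assumes "count A = l"
  shows "words_of_type l = permutations_of_multiset A"
  using assms by (auto simp: words_of_type_def permutations_of_multiset_def multiset_eq_iff)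

lemma card_words_of_type:
  assumes S: "finite S" and l: "\<And>j. j \<notin> S \<Longrightarrow> l j = 0"
  shows "finite (words_of_type l)"
    and "real (card (words_of_type l)) = fact (sum l S) / (\<Prod>j\<in>S. fact (l j))"
proof -
  define A where "A = Abs_multiset l"
  have cA: "count A = l" unfolding A_def by (rule count_Abs_multiset_finite_support[OF S l])
  have setA: "set_mset A \<subseteq> S" using cA l by (metis count_eq_zero_iff subsetI)
  have size: "size A = sum l S"
    unfolding size_multiset_overloaded_eq cA[symmetric]
    by (rule sum.mono_neutral_left) (use S setA in \<open>auto simp: not_in_iff\<close>)
  have facts: "(\<Prod>x\<in>set_mset A. fact (count A x)) = (\<Prod>j\<in>S. fact (l j) :: nat)"
    unfolding cA[symmetric]
    by (rule prod.mono_neutral_left) (use S setA in \<open>auto simp: not_in_iff\<close>)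
  have words: "words_of_type l = permutations_of_multiset A"
    by (rule words_of_type_eq_permutations_of_multiset[OF cA])
  show "finite (words_of_type l)" unfolding words by simp
  have "card (words_of_type l) * (\<Prod>j\<in>S. fact (l j)) = fact (sum l S)"
    using card_permutations_of_multiset_aux[of A] unfolding words facts size .
  then have "real (card (words_of_type l) * (\<Prod>j\<in>S. fact (l j))) = real (fact (sum l S))"
    by (rule arg_cong)
  then show "real (card (words_of_type l)) = fact (sum l S) / (\<Prod>j\<in>S. fact (l j))"
    using S by (simp add: eq_divide_eq)
qed

lemma prod_list_map_eq_prod_power_count:
  assumes "finite S" "set xs \<subseteq> S"
  shows "(\<Prod>x\<leftarrow>xs. g x) = (\<Prod>j\<in>S. g j ^ count (mset xs) j)"
  using assms(2)
proof (induction xs)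
  case (Cons a xs)
  have "(\<Prod>j\<in>S. g j ^ count (mset (a # xs)) j) =
      (\<Prod>j\<in>S. (if j = a then g j else 1) * g j ^ count (mset xs) j)"
    by (rule prod.cong) auto
  also have "\<dots> = g a * (\<Prod>j\<in>S. g j ^ count (mset xs) j)"
    using Cons.prems assms(1) by (simp add: prod.distrib prod.delta)
  finally show ?case using Cons by simp
qed simp

lemma sum_count_mset_eq_length:
  "finite S \<Longrightarrow> set xs \<subseteq> S \<Longrightarrow> (\<Sum>j\<in>S. count (mset xs) j) = length xs"
  by (simp add: count_mset sum_count_set)

lemma finite_outputs: "finite (outputs M n)"
proof -
  have "outputs M n = {xs. set xs \<subseteq> {- int M .. int M} \<and> length xs = n}"
    unfolding outputs_def by auto
  then show ?thesis by (simp add: finite_lists_length_eq)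
qed

lemma finite_comps: "finite (comps M k)"
proof -
  let ?S = "{- int M .. int M}"
  have "comps M k \<subseteq> {f. \<forall>x. (x \<in> ?S \<longrightarrow> f x \<in> {0..k}) \<and> (x \<notin> ?S \<longrightarrow> f x = 0)}"
  proof safe
    fix f x assume f: "f \<in> comps M k" and x: "x \<in> ?S"
    have "f x \<le> (\<Sum>j\<in>?S. f j)" by (rule member_le_sum) (use x in auto)
    then show "f x \<in> {0..k}" using f unfolding comps_def by auto
  qed (auto simp: comps_def)
  moreover have "finite {f. \<forall>x. (x \<in> ?S \<longrightarrow> f x \<in> {0..k}) \<and> (x \<notin> ?S \<longrightarrow> (f x :: nat) = 0)}"
    by (rule finite_set_of_finite_funs) auto
  ultimately show ?thesis by (rule finite_subset)
qed

lemma card_words_of_comp: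
  assumes "l \<in> comps M k"
  shows "finite (words_of_type l)" and "real (card (words_of_type l)) = multinom M k l"
  using card_words_of_type[of "{- int M .. int M}" l] assms
  by (auto simp: comps_def multinom_def)

lemma words_of_type_subset_outputs:
  assumes l: "l \<in> comps M n"
  shows "words_of_type l \<subseteq> outputs M n"
proof
  fix ys assume "ys \<in> words_of_type l"
  then have ys: "count (mset ys) = l" by (simp add: words_of_type_def)
  have set: "set ys \<subseteq> {- int M .. int M}"
    using l ys count_mset_0_iff unfolding comps_def by fastforce
  have "length ys = n"
    using l sum_count_mset_eq_length[OF _ set] unfolding ys comps_def by simp
  with set show "ys \<in> outputs M n" by (simp add: outputs_def)
qed

lemma type_in_comps:
  assumes "ys \<in> outputs M n"
  shows "count (mset ys) \<in> comps M n"
  using assms sum_count_mset_eq_length[of "{- int M .. int M}" ys]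
  by (auto simp: outputs_def comps_def simp flip: count_mset_0_iff)

definition type_lik :: "nat \<Rightarrow> (int \<Rightarrow> bool \<Rightarrow> real) \<Rightarrow> bool \<Rightarrow> (int \<Rightarrow> nat) \<Rightarrow> real" where
  "type_lik M eps b l = (\<Prod>j = - int M .. int M. eps j b ^ l j)"

lemma lik_Nil [simp]: "lik eps [] c = 1"
  by (simp add: lik_def)

lemma lik_Cons [simp]: "lik eps (y # ys) (b # c) = eps y b * lik eps ys c"
  unfolding lik_def by (simp only: length_Cons prod.lessThan_Suc_shift) simp

lemma lik_replicate: "lik eps ys (replicate (length ys) b) = (\<Prod>y\<leftarrow>ys. eps y b)"
  by (induction ys) simp_all

lemma lik_of_type:
  assumes "l \<in> comps M n" "ys \<in> words_of_type l"
  shows "lik eps ys (replicate n b) = type_lik M eps b l"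
proof -
  have "length ys = n" "set ys \<subseteq> {- int M .. int M}"
    using words_of_type_subset_outputs[OF assms(1)] assms(2) by (auto simp: outputs_def)
  then show ?thesis
    using lik_replicate[of eps ys b] prod_list_map_eq_prod_power_count[of _ ys "\<lambda>y. eps y b"] assms(2)
    by (simp add: type_lik_def words_of_type_def)
qed

definition flip_output :: "bool list \<Rightarrow> int list \<Rightarrow> int list" where
  "flip_output c ys = map2 (\<lambda>y b. if b then - y else y) ys c"

lemma flip_output_Nil [simp]: "flip_output [] ys = []" "flip_output c [] = []"
  by (simp_all add: flip_output_def)

lemma flip_output_Cons [simp]:
  "flip_output (b # c) (y # ys) = (if b then - y else y) # flip_output c ys"
  by (simp add: flip_output_def)

lemma flip_output_flip_output: "length c = length ys \<Longrightarrow> flip_output c (flip_output c ys) = ys"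
  by (induction c ys rule: list_induct2) auto

lemma flip_output_in_outputs:
  assumes "length c = n" "ys \<in> outputs M n"
  shows "flip_output c ys \<in> outputs M n"
proof -
  have "length c = length ys" "set ys \<subseteq> {- int M .. int M}"
    using assms by (auto simp: outputs_def)
  then have "length (flip_output c ys) = length ys \<and> set (flip_output c ys) \<subseteq> {- int M .. int M}"
    by (induction c ys rule: list_induct2) auto
  then show ?thesis using assms by (simp add: outputs_def)
qed

lemma bij_betw_flip_output:
  assumes "length c = n"
  shows "bij_betw (flip_output c) (outputs M n) (outputs M n)"
proof -
  have "\<forall>ys\<in>outputs M n. flip_output c (flip_output c ys) = ys"
    using assms by (auto simp: outputs_def flip_output_flip_output)
  moreover have "flip_output c ` outputs M n \<subseteq> outputs M n"
    using flip_output_in_outputs[OF assms] by auto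
  ultimately show ?thesis by (intro bij_betw_byWitness)
qed

lemma lik_flip_output:
  assumes sym: "\<And>y. y \<in> {- int M .. int M} \<Longrightarrow> eps y True = eps (- y) False"
    and "set ys \<subseteq> {- int M .. int M}" "length ys = length c" "length c = length c'"
  shows "lik eps (flip_output c ys) (map2 (\<noteq>) c' c) = lik eps ys c'"
  using assms(3,4,2)
proof (induction ys c c' rule: list_induct3)
  case (Cons y ys b c b' c')
  have "eps (if b then - y else y) (b' \<noteq> b) = eps y b'"
    using sym[of y] sym[of "- y"] Cons.prems by (cases b; cases b') auto
  then show ?case using Cons by simp
qed simp

lemma map2_neq_self: "map2 (\<noteq>) c c = replicate (length c) False"
  by (induction c) simp_all

lemma map2_neq_cancel: "length a = length b \<Longrightarrow> map2 (\<noteq>) (map2 (\<noteq>) a b) b = a"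
  by (induction a b rule: list_induct2) auto

lemma map2_neq_eq_zero_iff:
  "length a = length b \<Longrightarrow> map2 (\<noteq>) a b = replicate (length b) False \<longleftrightarrow> a = b"
  by (induction a b rule: list_induct2) auto

lemma binary_linear_code_length: "binary_linear_code n C \<Longrightarrow> c \<in> C \<Longrightarrow> length c = n"
  by (auto simp: binary_linear_code_def)

lemma binary_linear_code_translate:
  assumes lin: "binary_linear_code n C" and c: "c \<in> C"
  shows "(\<lambda>d. map2 (\<noteq>) d c) ` C = C"
proof
  show "(\<lambda>d. map2 (\<noteq>) d c) ` C \<subseteq> C" using lin c by (auto simp: binary_linear_code_def)
  show "C \<subseteq> (\<lambda>d. map2 (\<noteq>) d c) ` C"
  proof
    fix d assume d: "d \<in> C"
    have "d = map2 (\<noteq>) (map2 (\<noteq>) d c) c"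
      using map2_neq_cancel binary_linear_code_length[OF lin] c d by metis
    moreover have "map2 (\<noteq>) d c \<in> C" using lin c d by (auto simp: binary_linear_code_def)
    ultimately show "d \<in> (\<lambda>d. map2 (\<noteq>) d c) ` C" by (rule image_eqI)
  qed
qed

definition ml_error :: "(int \<Rightarrow> bool \<Rightarrow> real) \<Rightarrow> bool list set \<Rightarrow> bool list \<Rightarrow> int list \<Rightarrow> bool" where
  "ml_error eps C c ys \<longleftrightarrow> (\<exists>c'\<in>C. c' \<noteq> c \<and> lik eps ys c \<le> lik eps ys c')"

lemma ml_error_flip_output:
  assumes sym: "\<And>y. y \<in> {- int M .. int M} \<Longrightarrow> eps y True = eps (- y) False"
    and lin: "binary_linear_code n C" and c: "c \<in> C" and ys: "ys \<in> outputs M n"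
  shows "lik eps (flip_output c ys) (replicate n False) = lik eps ys c"
    and "ml_error eps C (replicate n False) (flip_output c ys) \<longleftrightarrow> ml_error eps C c ys"
proof -
  let ?z = "replicate n False" and ?shift = "\<lambda>d. map2 (\<noteq>) d c"
  have len: "length c' = n" if "c' \<in> C" for c' using lin that by (rule binary_linear_code_length)
  have ys': "set ys \<subseteq> {- int M .. int M}" "length ys = n" using ys by (auto simp: outputs_def)
  have lik_shift: "lik eps (flip_output c ys) (?shift c') = lik eps ys c'" if "c' \<in> C" for c'
    using lik_flip_output[of M eps, OF sym ys'(1)] len[OF c] len[OF that] ys'(2) by simp
  have shift_eq_zero: "?shift c' = ?z \<longleftrightarrow> c' = c" if "c' \<in> C" for c'
    using map2_neq_eq_zero_iff[of c' c] len[OF that] len[OF c] by simp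
  show lik_zero: "lik eps (flip_output c ys) ?z = lik eps ys c"
    using lik_shift[OF c] map2_neq_self[of c] len[OF c] by simp
  have "ml_error eps C ?z (flip_output c ys) \<longleftrightarrow>
      (\<exists>c'\<in>?shift ` C. c' \<noteq> ?z \<and> lik eps ys c \<le> lik eps (flip_output c ys) c')"
    unfolding ml_error_def binary_linear_code_translate[OF lin c] lik_zero ..
  also have "\<dots> \<longleftrightarrow> (\<exists>c'\<in>C. ?shift c' \<noteq> ?z \<and> lik eps ys c \<le> lik eps (flip_output c ys) (?shift c'))"
    by blast
  also have "\<dots> \<longleftrightarrow> (\<exists>c'\<in>C. c' \<noteq> c \<and> lik eps ys c \<le> lik eps ys c')"
    using lik_shift shift_eq_zero by (intro bex_cong refl) simp
  finally show "ml_error eps C ?z (flip_output c ys) \<longleftrightarrow> ml_error eps C c ys"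
    unfolding ml_error_def .
qed

lemma err_prob_eq_ml_error:
  "err_prob M n eps C c = (\<Sum>ys\<in>outputs M n. if ml_error eps C c ys then lik eps ys c else 0)"
  by (simp add: err_prob_def ml_error_def)

lemma err_prob_eq_err_prob_zero:
  assumes sym: "\<And>y. y \<in> {- int M .. int M} \<Longrightarrow> eps y True = eps (- y) False"
    and lin: "binary_linear_code n C" and c: "c \<in> C"
  shows "err_prob M n eps C c = err_prob M n eps C (replicate n False)"
proof -
  let ?z = "replicate n False"
  let ?f = "\<lambda>ys. if ml_error eps C ?z ys then lik eps ys ?z else 0"
  have "err_prob M n eps C ?z = (\<Sum>ys\<in>outputs M n. ?f (flip_output c ys))"
    unfolding err_prob_eq_ml_error
    by (rule sum.reindex_bij_betw[symmetric, OF bij_betw_flip_output[OF binary_linear_code_length[OF lin c]]])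
  also have "\<dots> = err_prob M n eps C c"
    unfolding err_prob_eq_ml_error using ml_error_flip_output[of M eps, OF sym lin c]
    by (intro sum.cong refl) simp
  finally show ?thesis ..
qed

lemma err_prob_zero_by_type:
  "err_prob M n eps C (replicate n False) =
     (\<Sum>l\<in>comps M n. type_lik M eps False l *
        real (card {ys \<in> words_of_type l. ml_error eps C (replicate n False) ys}))"
proof -
  let ?z = "replicate n False"
  let ?f = "\<lambda>ys. if ml_error eps C ?z ys then lik eps ys ?z else 0"
  have "err_prob M n eps C ?z = (\<Sum>l\<in>comps M n. \<Sum>ys\<in>{ys \<in> outputs M n. count (mset ys) = l}. ?f ys)"
    unfolding err_prob_eq_ml_error
    by (rule sum.group[symmetric, OF finite_outputs finite_comps]) (auto intro: type_in_comps)
  also have "\<dots> = (\<Sum>l\<in>comps M n. \<Sum>ys\<in>words_of_type l. ?f ys)"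
  proof (rule sum.cong[OF refl])
    fix l assume "l \<in> comps M n"
    then have "{ys \<in> outputs M n. count (mset ys) = l} = words_of_type l"
      using words_of_type_subset_outputs by (auto simp: words_of_type_def)
    then show "(\<Sum>ys\<in>{ys \<in> outputs M n. count (mset ys) = l}. ?f ys) = (\<Sum>ys\<in>words_of_type l. ?f ys)"
      by simp
  qed
  also have "\<dots> = (\<Sum>l\<in>comps M n. type_lik M eps False l *
        real (card {ys \<in> words_of_type l. ml_error eps C ?z ys}))"
  proof (rule sum.cong[OF refl])
    fix l assume l: "l \<in> comps M n"
    have "(\<Sum>ys\<in>words_of_type l. ?f ys) =
        (\<Sum>ys\<in>words_of_type l. if ml_error eps C ?z ys then type_lik M eps False l else 0)"
      using lik_of_type[OF l] by (intro sum.cong refl) simp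
    also have "\<dots> = type_lik M eps False l * real (card {ys \<in> words_of_type l. ml_error eps C ?z ys})"
      using card_words_of_comp(1)[OF l] by (simp add: sum.If_cases Int_def)
    finally show "(\<Sum>ys\<in>words_of_type l. ?f ys) = \<dots>" .
  qed
  finally show ?thesis .
qed

definition on_support :: "bool list \<Rightarrow> 'a list \<Rightarrow> 'a list" where
  "on_support c ys = map fst (filter snd (zip ys c))"

definition off_support :: "bool list \<Rightarrow> 'a list \<Rightarrow> 'a list" where
  "off_support c ys = map fst (filter (Not \<circ> snd) (zip ys c))"

lemma on_off_support_Cons [simp]:
  "on_support (b # c) (y # ys) = (if b then y # on_support c ys else on_support c ys)"
  "off_support (b # c) (y # ys) = (if b then off_support c ys else y # off_support c ys)"
  by (simp_all add: on_support_def off_support_def)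

lemma on_off_support_Nil [simp]:
  "on_support [] ys = []" "on_support c [] = []" "off_support [] ys = []" "off_support c [] = []"
  by (simp_all add: on_support_def off_support_def)

lemma mset_on_off_support:
  "length c = length ys \<Longrightarrow> mset ys = mset (on_support c ys) + mset (off_support c ys)"
  by (induction c ys rule: list_induct2) auto

lemma length_on_support: "length c = length ys \<Longrightarrow> length (on_support c ys) = hweight c"
  by (induction c ys rule: list_induct2) (auto simp: hweight_def)

lemma prod_list_on_off_support:
  fixes g :: "'a \<Rightarrow> 'b::comm_monoid_mult"
  shows "length c = length ys \<Longrightarrow>
     (\<Prod>y\<leftarrow>ys. g y) = (\<Prod>y\<leftarrow>on_support c ys. g y) * (\<Prod>y\<leftarrow>off_support c ys. g y)"
  by (induction c ys rule: list_induct2) (auto simp: ac_simps)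

lemma lik_on_off_support:
  "length c = length ys \<Longrightarrow>
     lik eps ys c = (\<Prod>y\<leftarrow>on_support c ys. eps y True) * (\<Prod>y\<leftarrow>off_support c ys. eps y False)"
  by (induction c ys rule: list_induct2) (auto simp: ac_simps)

lemma on_off_support_inj:
  assumes "length ys = length ys'" "length ys' = length c"
    and "on_support c ys = on_support c ys'" "off_support c ys = off_support c ys'"
  shows "ys = ys'"
  using assms by (induction ys ys' c rule: list_induct3) (auto split: if_splits)

definition pairwise_error_count :: "nat \<Rightarrow> (int \<Rightarrow> bool \<Rightarrow> real) \<Rightarrow> nat \<Rightarrow> nat \<Rightarrow> (int \<Rightarrow> nat) \<Rightarrow> real" where
  "pairwise_error_count M eps n w l =
     (\<Sum>mu\<in>{mu \<in> Uw M w l. type_lik M eps False mu \<le> type_lik M eps True mu}.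
        multinom M w mu * multinom M (n - w) (\<lambda>j. l j - mu j))"

lemma type_split_of_confusable_word:
  assumes nn: "\<And>y x. y \<in> {- int M .. int M} \<Longrightarrow> eps y x \<ge> 0"
    and l: "l \<in> comps M n" and pos: "type_lik M eps False l > 0" and c': "length c' = n"
    and ys: "ys \<in> words_of_type l" and confused: "lik eps ys (replicate n False) \<le> lik eps ys c'"
  defines "mu \<equiv> count (mset (on_support c' ys))"
  shows "mu \<in> Uw M (hweight c') l"
    and "type_lik M eps False mu \<le> type_lik M eps True mu"
    and "off_support c' ys \<in> words_of_type (\<lambda>j. l j - mu j)"
proof -
  let ?S = "{- int M .. int M}"
  have len: "length ys = n" and set: "set ys \<subseteq> ?S"
    using words_of_type_subset_outputs[OF l] ys by (auto simp: outputs_def)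
  have split: "mset ys = mset (on_support c' ys) + mset (off_support c' ys)"
    using c' len by (simp add: mset_on_off_support)
  have l_eq: "l j = mu j + count (mset (off_support c' ys)) j" for j
    using ys split by (simp add: words_of_type_def mu_def flip: count_union)
  have set_on: "set (on_support c' ys) \<subseteq> ?S" and set_off: "set (off_support c' ys) \<subseteq> ?S"
    using set arg_cong[OF split, of set_mset] by auto
  have "mu \<in> comps M (hweight c')"
    using set_on sum_count_mset_eq_length[OF _ set_on] length_on_support[of c' ys] c' len
    by (auto simp: comps_def mu_def)
  then show "mu \<in> Uw M (hweight c') l"
    using l_eq by (auto simp: Uw_def)
  show "off_support c' ys \<in> words_of_type (\<lambda>j. l j - mu j)"
    using l_eq by (auto simp: words_of_type_def)
  define R where "R = (\<Prod>y\<leftarrow>off_support c' ys. eps y False)"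
  have on_prod: "(\<Prod>y\<leftarrow>on_support c' ys. eps y b) = type_lik M eps b mu" for b
    unfolding type_lik_def mu_def by (rule prod_list_map_eq_prod_power_count[OF _ set_on]) simp
  have lik_zero: "lik eps ys (replicate n False) = type_lik M eps False mu * R"
    using lik_replicate[of eps ys False] prod_list_on_off_support[where g = "\<lambda>y. eps y False"]
      c' len on_prod
    by (simp add: R_def)
  have lik_c': "lik eps ys c' = type_lik M eps True mu * R"
    using lik_on_off_support[of c' ys eps] c' len on_prod by (simp add: R_def)
  have "R \<ge> 0"
    unfolding R_def using set_off nn by (intro prod_list_nonneg) auto
  moreover have "lik eps ys (replicate n False) > 0"
    using lik_of_type[OF l ys] pos by simp
  ultimately have "R > 0"
    using lik_zero by (cases "R = 0") auto
  then show "type_lik M eps False mu \<le> type_lik M eps True mu"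
    using confused lik_zero lik_c' by simp
qed

lemma comps_diff:
  assumes "l \<in> comps M n" "mu \<in> Uw M w l"
  shows "(\<lambda>j. l j - mu j) \<in> comps M (n - w)"
proof -
  have "(\<Sum>j = - int M .. int M. l j - mu j) =
      (\<Sum>j = - int M .. int M. l j) - (\<Sum>j = - int M .. int M. mu j)"
    using assms(2) by (intro sum_subtractf_nat) (auto simp: Uw_def)
  then show ?thesis using assms by (auto simp: comps_def Uw_def)
qed

lemma card_confusable_of_type_le:
  assumes nn: "\<And>y x. y \<in> {- int M .. int M} \<Longrightarrow> eps y x \<ge> 0"
    and l: "l \<in> comps M n" and pos: "type_lik M eps False l > 0" and c': "length c' = n"
  shows "real (card {ys \<in> words_of_type l. lik eps ys (replicate n False) \<le> lik eps ys c'})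
           \<le> pairwise_error_count M eps n (hweight c') l"
proof -
  define w where "w = hweight c'"
  define Y where "Y = {ys \<in> words_of_type l. lik eps ys (replicate n False) \<le> lik eps ys c'}"
  define Mu where "Mu = {mu \<in> Uw M w l. type_lik M eps False mu \<le> type_lik M eps True mu}"
  define T where "T = (\<Union>mu\<in>Mu. words_of_type mu \<times> words_of_type (\<lambda>j. l j - mu j))"
  have Mu_comps: "mu \<in> comps M w" "(\<lambda>j. l j - mu j) \<in> comps M (n - w)" if "mu \<in> Mu" for mu
    using that comps_diff[OF l] by (auto simp: Mu_def Uw_def)
  have fin_Mu: "finite Mu"
    by (rule finite_subset[OF _ finite_comps]) (use Mu_comps(1) in blast)
  have fin_T: "finite T"
    unfolding T_def
  proof (intro finite_UN_I finite_cartesian_product fin_Mu)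
    fix mu assume "mu \<in> Mu"
    then show "finite (words_of_type mu)" "finite (words_of_type (\<lambda>j. l j - mu j))"
      using card_words_of_comp(1)[OF Mu_comps(1)] card_words_of_comp(1)[OF Mu_comps(2)] by blast+
  qed
  have "inj_on (\<lambda>ys. (on_support c' ys, off_support c' ys)) Y"
  proof (rule inj_onI)
    fix ys ys' assume "ys \<in> Y" "ys' \<in> Y"
      and eq: "(on_support c' ys, off_support c' ys) = (on_support c' ys', off_support c' ys')"
    then have "length ys = n" "length ys' = n"
      using words_of_type_subset_outputs[OF l] by (auto simp: Y_def outputs_def)
    with eq c' show "ys = ys'" by (intro on_off_support_inj[of ys ys' c']) simp_all
  qed
  moreover have "(\<lambda>ys. (on_support c' ys, off_support c' ys)) ` Y \<subseteq> T"
  proof clarify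
    fix ys assume "ys \<in> Y"
    then have ys: "ys \<in> words_of_type l" and confused: "lik eps ys (replicate n False) \<le> lik eps ys c'"
      by (simp_all add: Y_def)
    note mu = type_split_of_confusable_word[OF nn l pos c' ys confused]
    have "count (mset (on_support c' ys)) \<in> Mu" using mu(1,2) by (simp add: Mu_def w_def)
    moreover have "on_support c' ys \<in> words_of_type (count (mset (on_support c' ys)))"
      by (simp add: words_of_type_def)
    ultimately show "(on_support c' ys, off_support c' ys) \<in> T" unfolding T_def using mu(3) by blast
  qed
  ultimately have "card Y \<le> card T" using fin_T by (rule card_inj_on_le)
  also have "card T \<le> (\<Sum>mu\<in>Mu. card (words_of_type mu \<times> words_of_type (\<lambda>j. l j - mu j)))"
    unfolding T_def using fin_Mu by (rule card_UN_le)
  finally have "real (card Y) \<le>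
      (\<Sum>mu\<in>Mu. real (card (words_of_type mu)) * real (card (words_of_type (\<lambda>j. l j - mu j))))"
    by (simp add: card_cartesian_product flip: of_nat_sum of_nat_mult)
  also have "\<dots> = pairwise_error_count M eps n w l"
    unfolding pairwise_error_count_def Mu_def[symmetric]
  proof (rule sum.cong[OF refl])
    fix mu assume "mu \<in> Mu"
    then show "real (card (words_of_type mu)) * real (card (words_of_type (\<lambda>j. l j - mu j))) =
        multinom M w mu * multinom M (n - w) (\<lambda>j. l j - mu j)"
      using card_words_of_comp(2)[OF Mu_comps(1)] card_words_of_comp(2)[OF Mu_comps(2)] by simp
  qed
  finally show ?thesis unfolding Y_def w_def .
qed

lemma pairwise_error_count_nonneg: "pairwise_error_count M eps n w l \<ge> 0"
  unfolding pairwise_error_count_def multinom_def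
  by (intro sum_nonneg mult_nonneg_nonneg divide_nonneg_nonneg prod_nonneg) simp_all

lemma finite_binary_linear_code:
  assumes "binary_linear_code n C"
  shows "finite C"
proof (rule finite_subset)
  show "C \<subseteq> {xs. set xs \<subseteq> UNIV \<and> length xs = n}"
    using assms by (auto simp: binary_linear_code_def)
qed (rule finite_lists_length_eq, simp)

lemma hweight_eq_0_iff: "hweight c = 0 \<longleftrightarrow> c = replicate (length c) False"
  by (induction c) (auto simp: hweight_def)

lemma hweight_nonzero_codeword:
  assumes lin: "binary_linear_code n C" and c: "c \<in> C" "c \<noteq> replicate n False"
  shows "hweight c \<in> {dmin C .. n}"
proof -
  have len: "length c = n" using lin c(1) by (rule binary_linear_code_length)
  then have "hweight c \<noteq> 0" using c(2) hweight_eq_0_iff by simp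
  then have "dmin C \<le> hweight c" unfolding dmin_def using c(1) by (intro cInf_lower) auto
  moreover have "hweight c \<le> n" using len length_filter_le[of id c] by (simp add: hweight_def)
  ultimately show ?thesis by simp
qed

lemma card_ml_error_of_type_le:
  assumes nn: "\<And>y x. y \<in> {- int M .. int M} \<Longrightarrow> eps y x \<ge> 0"
    and lin: "binary_linear_code n C" and l: "l \<in> comps M n" and pos: "type_lik M eps False l > 0"
  shows "real (card {ys \<in> words_of_type l. ml_error eps C (replicate n False) ys})
           \<le> (\<Sum>w = dmin C .. n. real (wdist C w) * pairwise_error_count M eps n w l)"
proof -
  let ?z = "replicate n False" and ?D = "C - {replicate n False}"
  let ?P = "\<lambda>w. pairwise_error_count M eps n w l"
  define A where "A c' = {ys \<in> words_of_type l. lik eps ys ?z \<le> lik eps ys c'}" for c'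
  have fin_D: "finite ?D" using finite_binary_linear_code[OF lin] by simp
  have "{ys \<in> words_of_type l. ml_error eps C ?z ys} = (\<Union>c'\<in>?D. A c')"
    by (auto simp: ml_error_def A_def)
  then have "card {ys \<in> words_of_type l. ml_error eps C ?z ys} \<le> (\<Sum>c'\<in>?D. card (A c'))"
    using card_UN_le[OF fin_D, of A] by simp
  then have "real (card {ys \<in> words_of_type l. ml_error eps C ?z ys}) \<le> (\<Sum>c'\<in>?D. real (card (A c')))"
    by (simp flip: of_nat_sum)
  also have "\<dots> \<le> (\<Sum>c'\<in>?D. ?P (hweight c'))"
    unfolding A_def using card_confusable_of_type_le[OF nn l pos] binary_linear_code_length[OF lin]
    by (intro sum_mono) simp
  also have "\<dots> = (\<Sum>w = dmin C .. n. \<Sum>c'\<in>{c' \<in> ?D. hweight c' = w}. ?P (hweight c'))"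
    by (intro sum.group[symmetric] fin_D finite_atLeastAtMost)
      (use hweight_nonzero_codeword[OF lin] in blast)
  also have "\<dots> = (\<Sum>w = dmin C .. n. real (card {c' \<in> ?D. hweight c' = w}) * ?P w)"
    by (intro sum.cong refl) simp
  also have "\<dots> \<le> (\<Sum>w = dmin C .. n. real (wdist C w) * ?P w)"
  proof (intro sum_mono mult_right_mono pairwise_error_count_nonneg)
    fix w
    have "card {c' \<in> ?D. hweight c' = w} \<le> wdist C w"
      unfolding wdist_def using finite_binary_linear_code[OF lin] by (intro card_mono) auto
    then show "real (card {c' \<in> ?D. hweight c' = w}) \<le> real (wdist C w)" by simp
  qed
  finally show ?thesis .
qed

theorem corollary1:
  fixes M n :: nat and eps :: "int \<Rightarrow> bool \<Rightarrow> real" and C :: "bool list set"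
    and m :: "int \<Rightarrow> nat" and c :: "bool list"
  assumes "M \<ge> 1"
    and "\<And>y x. y \<in> {- int M .. int M} \<Longrightarrow> eps y x \<ge> 0"
    and "\<And>x. (\<Sum>y = - int M .. int M. eps y x) = 1"
    and "\<And>y. y \<in> {- int M .. int M} \<Longrightarrow> eps y True = eps (- y) False"
    and "binary_linear_code n C"
    and "c \<in> C"
  shows "err_prob M n eps C c \<le>
    (\<Sum>l\<in>Ut M n m.
       (\<Prod>j = - int M .. int M. eps j False ^ l j) *
       min (\<Sum>w = dmin C .. n. real (wdist C w) *
              (\<Sum>mu\<in>{mu \<in> Uw M w l.
                       (\<Prod>j = - int M .. int M. eps j False ^ mu j)
                         \<le> (\<Prod>j = - int M .. int M. eps j True ^ mu j)}.
                 multinom M w mu * multinom M (n - w) (\<lambda>j. l j - mu j)))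
           (multinom M n l))
    + (\<Sum>l\<in>comps M n - Ut M n m.
         (\<Prod>j = - int M .. int M. eps j False ^ l j) * multinom M n l)"
proof -
  note nn = assms(2) and sym = assms(4) and lin = assms(5)
  let ?z = "replicate n False"
  let ?p = "type_lik M eps False"
  let ?E = "\<lambda>l. real (card {ys \<in> words_of_type l. ml_error eps C ?z ys})"
  let ?G = "\<lambda>l. \<Sum>w = dmin C .. n. real (wdist C w) * pairwise_error_count M eps n w l"
  have p_nonneg: "?p l \<ge> 0" for l
    unfolding type_lik_def using nn by (intro prod_nonneg) simp
  have E_le_multinom: "?E l \<le> multinom M n l" if "l \<in> comps M n" for l
    using card_mono[OF card_words_of_comp(1)[OF that], of "{ys \<in> words_of_type l. ml_error eps C ?z ys}"]
      card_words_of_comp(2)[OF that] by simp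
  have E_le_G: "?p l * ?E l \<le> ?p l * ?G l" if "l \<in> comps M n" for l
    using card_ml_error_of_type_le[OF nn lin that] p_nonneg[of l]
    by (cases "?p l = 0") (simp_all add: mult_left_mono)
  have Ut_comps: "Ut M n m \<subseteq> comps M n" by (auto simp: Ut_def)
  have "err_prob M n eps C c = (\<Sum>l\<in>comps M n. ?p l * ?E l)"
    using err_prob_eq_err_prob_zero[of M eps, OF sym lin assms(6)] err_prob_zero_by_type by simp
  also have "\<dots> = (\<Sum>l\<in>Ut M n m. ?p l * ?E l) + (\<Sum>l\<in>comps M n - Ut M n m. ?p l * ?E l)"
    using sum.subset_diff[OF Ut_comps finite_comps] by (simp add: add.commute)
  also have "\<dots> \<le> (\<Sum>l\<in>Ut M n m. ?p l * min (?G l) (multinom M n l))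
      + (\<Sum>l\<in>comps M n - Ut M n m. ?p l * multinom M n l)"
    using Ut_comps E_le_G E_le_multinom p_nonneg
    by (intro add_mono sum_mono) (auto simp: min_mult_distrib_left mult_left_mono)
  finally show ?thesis unfolding type_lik_def pairwise_error_count_def .
qed

end
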